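(* Let $R$ be a commutative ring with $1$ and let $H_1,\dots,H_m$ be hyperplanes in $R^n$, where $H_i$ is the zero set of $(\mathbf a^i,\mathbf x)-b_i=a^i_1x_1+\dots+a^i_nx_n-b_i$ with $a^i_j,b_i\in R$. Suppose every vertex of the unit cube $\{0,1\}^n\subseteq R^n$ other than $\mathbf 0$ lies in at least one $H_i$. If $\prod_{i=1}^m b_i\neq 0$, then $m\ge n$. *)

theory Defs
  imports Main
begin

end

theory Submission
  imports Defs
begin

text \<open>Identify a vertex of the cube with its support S. Hyperplane i gives the affine set
function S \<mapsto> b i - (\<Sum>j\<in>S. a i j), and the product F of all m of them vanishes at every
nonempty S but equals \<Prod>i. b i \<noteq> 0 at S = {}. Hence the alternating sum
\<Sum>S. (-1)^|S| F S over the subsets of {..<n} is nonzero. On the other hand the alternating sum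
over T is a |T|-th finite difference, so it kills every product of fewer than |T| affine set
functions; therefore m \<ge> n.\<close>

definition alternating_sum :: "'a set \<Rightarrow> ('a set \<Rightarrow> 'r::comm_ring_1) \<Rightarrow> 'r" where
  "alternating_sum T F = (\<Sum>S\<in>Pow T. (-1) ^ card S * F S)"

definition affine_set_fun :: "'a set \<Rightarrow> ('a set \<Rightarrow> 'r::comm_ring_1) \<Rightarrow> bool" where
  "affine_set_fun T f \<longleftrightarrow> (\<exists>c d. \<forall>S\<subseteq>T. f S = (\<Sum>j\<in>S. c j) + d)"

lemma alternating_sum_cong:
  "(\<And>S. S \<subseteq> T \<Longrightarrow> F S = G S) \<Longrightarrow> alternating_sum T F = alternating_sum T G"
  unfolding alternating_sum_def by (rule sum.cong) auto

lemma alternating_sum_insert: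
  assumes "finite T" "j \<notin> T"
  shows "alternating_sum (insert j T) F
           = alternating_sum T F - alternating_sum T (\<lambda>S. F (insert j S))"
proof -
  have inj: "inj_on (insert j) (Pow T)"
    using assms(2) by (intro inj_onI) (auto simp: insert_ident)
  have card_insert: "card (insert j S) = Suc (card S)" if "S \<in> Pow T" for S
  proof -
    have "finite S" "j \<notin> S" using that assms finite_subset by auto
    then show ?thesis by simp
  qed
  have "alternating_sum (insert j T) F
          = alternating_sum T F + (\<Sum>S\<in>insert j ` Pow T. (-1) ^ card S * F S)"
    unfolding alternating_sum_def Pow_insert
    using assms by (intro sum.union_disjoint) auto
  also have "(\<Sum>S\<in>insert j ` Pow T. (-1) ^ card S * F S)
               = - alternating_sum T (\<lambda>S. F (insert j S))"
    unfolding alternating_sum_def sum.reindex[OF inj] sum_negf[symmetric]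
    by (rule sum.cong) (simp_all add: card_insert)
  finally show ?thesis by simp
qed

lemma alternating_sum_const:
  assumes "finite T" "T \<noteq> {}"
  shows "alternating_sum T (\<lambda>S. c) = 0"
proof -
  obtain j T' where "T = insert j T'" "j \<notin> T'"
    using assms(2) by (meson ex_in_conv mk_disjoint_insert)
  then show ?thesis using assms(1) by (simp add: alternating_sum_insert)
qed

lemma alternating_sum_indicator_mult:
  assumes "finite T" "j \<in> T"
  shows "alternating_sum T (\<lambda>S. of_bool (j \<in> S) * F S)
           = - alternating_sum (T - {j}) (\<lambda>S. F (insert j S))"
proof -
  obtain T' where T: "T = insert j T'" "j \<notin> T'"
    using assms(2) by (meson mk_disjoint_insert)
  have "alternating_sum T' (\<lambda>S. of_bool (j \<in> S) * F S) = 0"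
    unfolding alternating_sum_def using T(2) by (intro sum.neutral) auto
  then show ?thesis using assms(1) T by (simp add: alternating_sum_insert)
qed

lemma affine_set_fun_insert:
  assumes "affine_set_fun T f" "finite T" "j \<in> T"
  shows "affine_set_fun (T - {j}) (\<lambda>S. f (insert j S))"
proof -
  obtain c d where f: "\<And>S. S \<subseteq> T \<Longrightarrow> f S = (\<Sum>j\<in>S. c j) + d"
    using assms(1) unfolding affine_set_fun_def by blast
  have "f (insert j S) = (\<Sum>j\<in>S. c j) + (d + c j)" if "S \<subseteq> T - {j}" for S
  proof -
    have "insert j S \<subseteq> T" "finite S" "j \<notin> S"
      using that assms(2,3) finite_subset[of S T] by auto
    then show ?thesis by (simp add: f algebra_simps)
  qed
  then show ?thesis unfolding affine_set_fun_def by blast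
qed

lemma alternating_sum_prod_affine_eq_0:
  assumes "finite I" "finite T" "card I < card T"
    and "\<And>i. i \<in> I \<Longrightarrow> affine_set_fun T (f i)"
  shows "alternating_sum T (\<lambda>S. \<Prod>i\<in>I. f i S) = 0"
  using assms
proof (induction I arbitrary: T f rule: finite_induct)
  case empty
  then show ?case by (simp add: alternating_sum_const card_gt_0_iff)
next
  case (insert i I)
  define G where "G S = (\<Prod>i\<in>I. f i S)" for S
  obtain c d where f: "\<And>S. S \<subseteq> T \<Longrightarrow> f i S = (\<Sum>j\<in>S. c j) + d"
    using insert.prems(3) unfolding affine_set_fun_def by blast
  have G_vanishes: "alternating_sum T G = 0"
    unfolding G_def using insert.prems insert.hyps by (intro insert.IH) auto
  have shifted_G_vanishes: "alternating_sum (T - {j}) (\<lambda>S. G (insert j S)) = 0" if "j \<in> T" for j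
    unfolding G_def using insert.prems insert.hyps that
    by (intro insert.IH[of "T - {j}" "\<lambda>i S. f i (insert j S)"])
       (auto simp: affine_set_fun_insert card_Diff_singleton)
  txt \<open>Expand the factor f i through the indicators of j \<in> S: each indicator moves the
    alternating sum to T - {j} and removes one factor, so both resulting sums vanish by induction.\<close>
  have "alternating_sum T (\<lambda>S. \<Prod>i\<in>insert i I. f i S)
          = alternating_sum T (\<lambda>S. (\<Sum>j\<in>T. c j * (of_bool (j \<in> S) * G S)) + d * G S)"
  proof (rule alternating_sum_cong)
    fix S assume "S \<subseteq> T"
    then have "(\<Sum>j\<in>S. c j) = (\<Sum>j\<in>T. c j * of_bool (j \<in> S))"
      using insert.prems(1) by (simp add: sum.inter_restrict Int_absorb1 flip: of_bool_conj)
    then show "(\<Prod>i\<in>insert i I. f i S) = (\<Sum>j\<in>T. c j * (of_bool (j \<in> S) * G S)) + d * G S"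
      using insert.hyps \<open>S \<subseteq> T\<close>
      by (simp add: f G_def sum_distrib_left algebra_simps)
  qed
  also have "\<dots> = (\<Sum>j\<in>T. c j * alternating_sum T (\<lambda>S. of_bool (j \<in> S) * G S))
                  + d * alternating_sum T G"
    unfolding alternating_sum_def
    by (simp add: sum.distrib sum_distrib_left sum.swap[of _ "Pow T"] algebra_simps)
  also have "\<dots> = 0"
    using insert.prems(1) by (simp add: alternating_sum_indicator_mult shifted_G_vanishes G_vanishes)
  finally show ?case .
qed

lemma alternating_sum_supported_at_empty:
  assumes "finite T" "\<And>S. S \<subseteq> T \<Longrightarrow> S \<noteq> {} \<Longrightarrow> F S = 0"
  shows "alternating_sum T F = F {}"
proof -
  have "alternating_sum T F = (-1) ^ card {} * F {} + (\<Sum>S\<in>Pow T - {{}}. (-1) ^ card S * F S)"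
    unfolding alternating_sum_def using assms(1) by (subst sum.remove[of _ "{}"]) auto
  also have "(\<Sum>S\<in>Pow T - {{}}. (-1) ^ card S * F S) = 0"
    using assms(2) by (intro sum.neutral) auto
  finally show ?thesis by simp
qed

theorem theorem6:
  fixes a :: "nat \<Rightarrow> nat \<Rightarrow> 'r::comm_ring_1"
    and b :: "nat \<Rightarrow> 'r"
    and m n :: nat
  assumes cover: "\<And>v :: nat \<Rightarrow> 'r. (\<forall>j<n. v j = 0 \<or> v j = 1) \<Longrightarrow> (\<exists>j<n. v j \<noteq> 0)
             \<Longrightarrow> (\<exists>i<m. (\<Sum>j<n. a i j * v j) - b i = 0)"
    and prod_nz: "(\<Prod>i<m. b i) \<noteq> 0"
  shows "m \<ge> n"
proof (rule ccontr)
  assume "\<not> m \<ge> n"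
  define f where "f i S = b i - (\<Sum>j\<in>S. a i j)" for i S
  have "affine_set_fun {..<n} (f i)" for i
    unfolding affine_set_fun_def f_def by (intro exI[of _ "\<lambda>j. - a i j"] exI[of _ "b i"]) (simp add: sum_negf)
  with \<open>\<not> m \<ge> n\<close> have "alternating_sum {..<n} (\<lambda>S. \<Prod>i<m. f i S) = 0"
    by (intro alternating_sum_prod_affine_eq_0) auto
  moreover have "(\<Prod>i<m. f i S) = 0" if "S \<subseteq> {..<n}" "S \<noteq> {}" for S
  proof -
    have "\<exists>j<n. of_bool (j \<in> S) \<noteq> (0::'r)"
      using that by auto
    then obtain i where "i < m" "(\<Sum>j<n. a i j * of_bool (j \<in> S)) - b i = 0"
      using cover[of "\<lambda>j. of_bool (j \<in> S)"] by auto
    moreover have "(\<Sum>j<n. a i j * of_bool (j \<in> S)) = (\<Sum>j\<in>S. a i j)"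
      using that(1) by (simp add: sum.inter_restrict Int_absorb1)
    ultimately show ?thesis by (intro prod_zero bexI[of _ i]) (auto simp: f_def)
  qed
  then have "alternating_sum {..<n} (\<lambda>S. \<Prod>i<m. f i S) = (\<Prod>i<m. f i {})"
    by (intro alternating_sum_supported_at_empty) auto
  ultimately show False using prod_nz by (simp add: f_def)
qed

end
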